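(* Let $(\Omega,\mathcal{F},P)$ be a probability space and $T:\Omega\to\Omega$ an invertible measurable transformation. Suppose that for every $A\in\mathcal{F}$ the limit $Q(A):=\lim_{n\to\infty}\frac{1}{n}\sum_{i=0}^{n-1}P(T^iA)$ exists. Then $Q$ is a $T$-invariant probability. Moreover, if $Q$ is ergodic, then $$\lim_{\substack{n+m\to\infty\\ m,n\ge0}}\frac{1}{m+n+1}\sum_{i=-m}^nP(B\cap T^iC)=P(B)Q(C)\quad\text{for all }B,C\in\mathcal{F}\qquad(\ast)$$ and for every $f\in L^1(\Omega,\mathcal{F},Q)$, $$\lim_{\substack{n+m\to\infty\\ m,n\ge0}}\frac{1}{m+n+1}\sum_{i=-m}^nf(T^i\omega)=\int f\,dQ\quad\text{for }P\text{-a.s. }\omega\in\Omega.\qquad(\ast\ast)$$ Conversely, if $(\ast)$ holds or $(\ast\ast)$ holds, then $Q$ is ergodic. In particular, $(\ast)$ and $(\ast\ast)$ are equivalent.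
   Context: $P$ need not be $T$-invariant. $\mathcal{I}=\{A\in\mathcal{F}:T^{-1}A=A\}$; a $T$-invariant probability $Q$ is ergodic if $Q(A)\in\{0,1\}$ for all $A\in\mathcal{I}$. *)

theory Defs
  imports "HOL-Probability.Probability"
begin

definition iterz :: "'a measure \<Rightarrow> ('a \<Rightarrow> 'a) \<Rightarrow> int \<Rightarrow> 'a \<Rightarrow> 'a" where
  "iterz M T i = (if 0 \<le> i then T ^^ nat i else (the_inv_into (space M) T) ^^ nat (- i))"

definition cesaro_avg :: "'a measure \<Rightarrow> ('a \<Rightarrow> 'a) \<Rightarrow> 'a set \<Rightarrow> nat \<Rightarrow> real" where
  "cesaro_avg M T A n = (\<Sum>i<n. measure M ((T ^^ i) ` A)) / real n"

definition sum_to_infty :: "(nat \<times> nat) filter" where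
  "sum_to_infty = filtercomap (\<lambda>(m, n). m + n) sequentially"

definition ergodic_for :: "'a measure \<Rightarrow> ('a \<Rightarrow> 'a) \<Rightarrow> 'a measure \<Rightarrow> bool" where
  "ergodic_for M T Q \<longleftrightarrow>
     (\<forall>A\<in>sets M. T -` A \<inter> space M = A \<longrightarrow> measure Q A = 0 \<or> measure Q A = 1)"

end

theory Submission
  imports Defs
begin

text \<open>
  The Cesaro averages of the push-forwards of P under T^i are finitely additive, and a setwise limit
  of uniformly bounded measures is again sigma-additive by a gliding hump argument, so Q is a
  probability; shifting an average by one step changes it by O(1/n), so Q is T-invariant.
  On invariant sets Q agrees with P, and the saturation of a Q-null set is invariant, hence P << Q.
  If Q is ergodic, Birkhoff's theorem for T and for its inverse holds Q-almost everywhere, hence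
  P-almost everywhere, and gives the two-sided averages; integrating the averages of 1_C against 1_B
  gives the mixing property. Conversely, for an invariant set A either property, applied with
  B = C = A or with f = 1_A, forces Q(A) = Q(A)^2.
\<close>

section \<open>Limits as m + n tends to infinity\<close>

lemma eventually_sum_to_infty:
  "eventually P sum_to_infty \<longleftrightarrow> (\<exists>N. \<forall>m n. N \<le> m + n \<longrightarrow> P (m, n))"
  unfolding sum_to_infty_def eventually_filtercomap_at_top_linorder by auto

lemma sum_to_infty_neq_bot: "sum_to_infty \<noteq> bot"
  unfolding trivial_limit_def eventually_sum_to_infty by (metis add_0 order_refl)

lemma filterlim_sum_to_infty_iff:
  "filterlim p sum_to_infty F \<longleftrightarrow> filterlim (\<lambda>k. fst (p k) + snd (p k)) at_top F"
  unfolding sum_to_infty_def filterlim_filtercomap_iff by (simp add: o_def case_prod_beta)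

lemma filterlim_add_sum_to_infty: "filterlim (\<lambda>p. fst p + snd p) at_top sum_to_infty"
  using filterlim_sum_to_infty_iff[of "\<lambda>p. p"] filterlim_ident by blast

lemma filterlim_swap_sum_to_infty: "filterlim (\<lambda>(m, n). (n, m)) sum_to_infty sum_to_infty"
  unfolding filterlim_sum_to_infty_iff
  using filterlim_add_sum_to_infty by (simp add: case_prod_beta add.commute)

lemma tendsto_sum_to_infty_sequentially:
  fixes g :: "nat \<times> nat \<Rightarrow> 'b::metric_space"
  assumes "\<And>p. filterlim p sum_to_infty sequentially \<Longrightarrow> (\<lambda>k. g (p k)) \<longlonglongrightarrow> L"
  shows "(g \<longlongrightarrow> L) sum_to_infty"
proof (rule ccontr)
  assume "\<not> ?thesis"
  then obtain e where "e > 0" and "\<forall>N. \<exists>m n. N \<le> m + n \<and> e \<le> dist (g (m, n)) L"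
    unfolding tendsto_iff eventually_sum_to_infty by (auto simp: not_less)
  then have "\<forall>N. \<exists>q. N \<le> fst q + snd q \<and> e \<le> dist (g q) L"
    by (metis fst_conv snd_conv)
  then obtain p where p: "\<And>N. N \<le> fst (p N) + snd (p N) \<and> e \<le> dist (g (p N)) L"
    by metis
  have "filterlim p sum_to_infty sequentially"
    unfolding filterlim_sum_to_infty_iff
    by (rule filterlim_at_top_mono[OF filterlim_ident]) (use p in auto)
  then have "eventually (\<lambda>k. dist (g (p k)) L < e) sequentially"
    using assms \<open>e > 0\<close> tendsto_iff by metis
  then show False using p by (metis eventually_at_top_linorder order_refl not_less)
qed

lemma integral_dominated_convergence_sum_to_infty:
  fixes g :: "nat \<times> nat \<Rightarrow> 'a \<Rightarrow> real"
  assumes [measurable]: "\<And>p. g p \<in> borel_measurable M" "h \<in> borel_measurable M"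
    and "integrable M w"
    and "AE x in M. ((\<lambda>p. g p x) \<longlongrightarrow> h x) sum_to_infty"
    and "\<And>p. AE x in M. norm (g p x) \<le> w x"
  shows "((\<lambda>p. \<integral>x. g p x \<partial>M) \<longlongrightarrow> \<integral>x. h x \<partial>M) sum_to_infty"
proof (rule tendsto_sum_to_infty_sequentially)
  fix p assume p: "filterlim p sum_to_infty sequentially"
  show "(\<lambda>k. \<integral>x. g (p k) x \<partial>M) \<longlonglongrightarrow> \<integral>x. h x \<partial>M"
  proof (rule integral_dominated_convergence[where w=w])
    show "AE x in M. (\<lambda>k. g (p k) x) \<longlonglongrightarrow> h x"
      using assms(4) by eventually_elim (rule filterlim_compose[OF _ p])
  qed (use assms in auto)
qed

lemma tendsto_weighted_sum_to_infty:
  fixes e :: "nat \<Rightarrow> real"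
  assumes e: "e \<longlonglongrightarrow> 0" and f: "\<And>p. f p \<le> fst p + snd p"
  shows "((\<lambda>p. real (Suc (f p)) * e (f p) / real (fst p + snd p + 1)) \<longlongrightarrow> 0) sum_to_infty"
proof -
  obtain B where B: "\<And>n. \<bar>e n\<bar> \<le> B"
    using convergent_imp_Bseq[of e] e by (auto simp: Bseq_def convergent_def)
  show ?thesis unfolding tendsto_iff eventually_sum_to_infty
  proof (intro allI impI)
    fix \<epsilon> :: real assume "\<epsilon> > 0"
    then obtain N where N: "\<And>n. N \<le> n \<Longrightarrow> \<bar>e n\<bar> < \<epsilon>"
      using e unfolding LIMSEQ_iff by auto
    obtain K :: nat where K: "real N * B < real K * \<epsilon>"
      using reals_Archimedean3[OF \<open>\<epsilon> > 0\<close>] by blast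
    have bound: "\<bar>real (Suc k) * e k\<bar> < \<epsilon> * real (s + 1)" if "k \<le> s" "K \<le> s" for k s
    proof (cases "N \<le> k")
      case True
      have "\<bar>real (Suc k) * e k\<bar> \<le> real (s + 1) * \<bar>e k\<bar>"
        using \<open>k \<le> s\<close> by (simp add: abs_mult mult_right_mono)
      also have "\<dots> < \<epsilon> * real (s + 1)" using N[OF True] by (simp add: mult.commute)
      finally show ?thesis .
    next
      case False
      have "\<bar>real (Suc k) * e k\<bar> \<le> real N * B"
        using False B[of k] unfolding abs_mult by (intro mult_mono) auto
      also have "\<dots> < real K * \<epsilon>" by (rule K)
      also have "\<dots> \<le> \<epsilon> * real (s + 1)"
        using \<open>K \<le> s\<close> \<open>\<epsilon> > 0\<close> by (simp add: mult.commute)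
      finally show ?thesis .
    qed
    show "\<exists>K. \<forall>m n. K \<le> m + n \<longrightarrow>
        dist (real (Suc (f (m, n))) * e (f (m, n)) / real (fst (m, n) + snd (m, n) + 1)) 0 < \<epsilon>"
    proof (intro exI[of _ K] allI impI)
      fix m n assume "K \<le> m + n"
      from bound[OF f[of "(m, n)", unfolded fst_conv snd_conv] this]
      show "dist (real (Suc (f (m, n))) * e (f (m, n)) / real (fst (m, n) + snd (m, n) + 1)) 0 < \<epsilon>"
        by (simp add: dist_real_def abs_divide divide_less_eq del: of_nat_Suc)
    qed
  qed
qed

lemma tendsto_two_sided_average:
  fixes a b :: "nat \<Rightarrow> real"
  assumes a: "(\<lambda>n. a n / real n) \<longlonglongrightarrow> L" and b: "(\<lambda>n. b n / real n) \<longlonglongrightarrow> L"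
  shows "((\<lambda>(m, n). (a (Suc n) + b (Suc m) + c) / real (m + n + 1)) \<longlongrightarrow> L) sum_to_infty"
proof -
  define e where "e n = a (Suc n) / real (Suc n) - L" for n
  define e' where "e' n = b (Suc n) / real (Suc n) - L" for n
  have e: "e \<longlonglongrightarrow> 0" and e': "e' \<longlonglongrightarrow> 0"
    using tendsto_diff[OF LIMSEQ_Suc[OF a] tendsto_const[of L]]
      tendsto_diff[OF LIMSEQ_Suc[OF b] tendsto_const[of L]]
    unfolding e_def[abs_def] e'_def[abs_def] by simp_all
  have "(\<lambda>k. (L + c) / real (Suc k)) \<longlonglongrightarrow> 0"
    using LIMSEQ_Suc[OF lim_const_over_n[of "L + c"]] by simp
  from filterlim_compose[OF this filterlim_add_sum_to_infty]
  have c: "((\<lambda>p. (L + c) / real (fst p + snd p + 1)) \<longlongrightarrow> 0) sum_to_infty"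
    by simp
  have "((\<lambda>p. L + (real (Suc (snd p)) * e (snd p) / real (fst p + snd p + 1)
      + real (Suc (fst p)) * e' (fst p) / real (fst p + snd p + 1)
      + (L + c) / real (fst p + snd p + 1))) \<longlongrightarrow> L + (0 + 0 + 0)) sum_to_infty"
    by (intro tendsto_intros tendsto_weighted_sum_to_infty e e' c) auto
  moreover have "(a (Suc n) + b (Suc m) + c) / real (m + n + 1)
      = L + (real (Suc n) * e n / real (m + n + 1) + real (Suc m) * e' m / real (m + n + 1)
        + (L + c) / real (m + n + 1))" for m n
  proof -
    have "real (Suc n) * e n = a (Suc n) - real (Suc n) * L"
      and "real (Suc m) * e' m = b (Suc m) - real (Suc m) * L"
      by (simp_all add: e_def e'_def field_simps)
    then show ?thesis by (simp add: add_divide_distrib[symmetric] field_simps)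
  qed
  ultimately show ?thesis by (simp add: case_prod_beta')
qed

lemma sum_int_interval_split:
  fixes F :: "int \<Rightarrow> 'a::ab_group_add"
  shows "(\<Sum>i\<in>{- int m..int n}. F i) = (\<Sum>k<Suc n. F (int k)) + (\<Sum>k<Suc m. F (- int k)) - F 0"
proof (induction n)
  case 0
  show ?case
  proof (induction m)
    case (Suc m)
    have "{- int (Suc m)..int 0} = insert (- int (Suc m)) {- int m..int 0}" by auto
    then show ?case using Suc by (simp add: algebra_simps)
  qed simp
next
  case (Suc n)
  have "{- int m..int (Suc n)} = insert (int (Suc n)) {- int m..int n}" by auto
  then show ?case using Suc by (simp add: algebra_simps)
qed

lemma sum_int_interval_reflect:
  "(\<Sum>i\<in>{- int m..int n}. g (- i)) = (\<Sum>j\<in>{- int n..int m}. g j)"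
proof -
  have "uminus ` {- int m..int n} = {- int n..int m}" by simp
  then have "(\<Sum>j\<in>{- int n..int m}. g j) = (\<Sum>j\<in>uminus ` {- int m..int n}. g j)" by simp
  also have "\<dots> = (\<Sum>i\<in>{- int m..int n}. g (- i))" by (subst sum.reindex) (auto simp: inj_on_def)
  finally show ?thesis by simp
qed

lemma average_const_int_interval: "(\<Sum>i\<in>{- int m..int n}. c) / real (m + n + 1) = (c :: real)"
  by (simp add: field_simps)

section \<open>Birkhoff's ergodic theorem\<close>

lemma measurable_funpow: "f \<in> M \<rightarrow>\<^sub>M M \<Longrightarrow> f ^^ n \<in> M \<rightarrow>\<^sub>M M"
  by (induction n) (auto intro: measurable_comp)

lemma eventually_average_less:
  fixes s :: "nat \<Rightarrow> real"
  assumes bdd: "\<And>k. bdd_above (range (\<lambda>n. s n - real n * (L + 1 / real (Suc k))))"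
    and "L < a"
  shows "eventually (\<lambda>n. s n / real n < a) sequentially"
proof -
  obtain k where k: "inverse (real (Suc k)) < a - L"
    using reals_Archimedean \<open>L < a\<close> by (metis diff_gt_0_iff_gt)
  define e where "e = 1 / real (Suc k)"
  obtain K where K: "\<And>n. s n - real n * (L + e) \<le> K"
    using bdd[of k] unfolding e_def bdd_above_def by auto
  have "(\<lambda>n. K / real n + (L + e)) \<longlonglongrightarrow> 0 + (L + e)"
    by (intro tendsto_intros)
  moreover have "L + e < a" using k by (simp add: e_def inverse_eq_divide)
  ultimately have "eventually (\<lambda>n. K / real n + (L + e) < a) sequentially"
    by (simp add: order_tendstoD(2))
  moreover have "eventually (\<lambda>n. s n / real n \<le> K / real n + (L + e)) sequentially"
  proof (rule eventually_sequentiallyI[of 1])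
    fix n :: nat assume "1 \<le> n"
    then show "s n / real n \<le> K / real n + (L + e)"
      using K[of n] by (simp add: field_simps)
  qed
  ultimately show ?thesis by eventually_elim simp
qed

lemma tendsto_average_of_bdd_deviations:
  fixes s :: "nat \<Rightarrow> real"
  assumes upper: "\<And>k. bdd_above (range (\<lambda>n. s n - real n * (L + 1 / real (Suc k))))"
    and lower: "\<And>k. bdd_above (range (\<lambda>n. real n * (L - 1 / real (Suc k)) - s n))"
  shows "(\<lambda>n. s n / real n) \<longlonglongrightarrow> L"
proof (rule order_tendstoI)
  show "eventually (\<lambda>n. s n / real n < a) sequentially" if "L < a" for a
    using eventually_average_less[OF upper that] .
  show "eventually (\<lambda>n. a < s n / real n) sequentially" if "a < L" for a
  proof -
    have "bdd_above (range (\<lambda>n. - s n - real n * (- L + 1 / real (Suc k))))" for k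
      using lower[of k] by (simp add: algebra_simps)
    from eventually_average_less[OF this, of "- a"] that show ?thesis by simp
  qed
qed

lemma bdd_above_range_Suc_diff_iff:
  fixes f :: "nat \<Rightarrow> real"
  shows "bdd_above (range (\<lambda>n. f (Suc n) - c)) \<longleftrightarrow> bdd_above (range f)"
proof
  assume "bdd_above (range (\<lambda>n. f (Suc n) - c))"
  then obtain K where K: "\<And>n. f (Suc n) - c \<le> K" by (auto simp: bdd_above_def)
  have "f n \<le> max (f 0) (K + c)" for n using K[of "n - 1"] by (cases n) auto
  then show "bdd_above (range f)" by (auto simp: bdd_above_def)
next
  assume "bdd_above (range f)"
  then obtain K where "\<And>n. f n \<le> K" by (auto simp: bdd_above_def)
  then show "bdd_above (range (\<lambda>n. f (Suc n) - c))"
    by (intro bdd_aboveI2[of _ _ "K - c"]) (simp add: diff_right_mono)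
qed

lemma bdd_above_range_iff_nat:
  fixes f :: "nat \<Rightarrow> real"
  shows "bdd_above (range f) \<longleftrightarrow> (\<exists>K::nat. \<forall>n. f n \<le> real K)"
  unfolding bdd_above_def by (auto, meson order_trans real_arch_simple)

locale measure_preserving = prob_space M for M :: "'a measure" +
  fixes T :: "'a \<Rightarrow> 'a"
  assumes measurable_T [measurable]: "T \<in> M \<rightarrow>\<^sub>M M"
    and distr_T: "distr M M T = M"
begin

lemma distr_funpow: "distr M M (T ^^ n) = M"
proof (induction n)
  case (Suc n)
  have "distr M M (T ^^ Suc n) = distr (distr M M (T ^^ n)) M T"
    by (simp add: distr_distr)
  then show ?case using Suc.IH distr_T by (simp add: o_def)
qed (simp add: id_def)

lemma integral_funpow:
  fixes g :: "'a \<Rightarrow> real"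
  shows "g \<in> borel_measurable M \<Longrightarrow> (\<integral>x. g ((T ^^ n) x) \<partial>M) = integral\<^sup>L M g"
  using integral_distr[of "T ^^ n" M M g] distr_funpow by simp

lemma integrable_funpow:
  fixes g :: "'a \<Rightarrow> real"
  shows "integrable M g \<Longrightarrow> integrable M (\<lambda>x. g ((T ^^ n) x))"
  using integrable_distr_eq[of "T ^^ n" M M g] distr_funpow by simp

definition birkhoff_sum :: "('a \<Rightarrow> real) \<Rightarrow> nat \<Rightarrow> 'a \<Rightarrow> real" where
  "birkhoff_sum g n x = (\<Sum>i<n. g ((T ^^ i) x))"

lemma birkhoff_sum_Suc: "birkhoff_sum g (Suc n) x = g x + birkhoff_sum g n (T x)"
  unfolding birkhoff_sum_def sum.lessThan_Suc_shift
  by (simp add: funpow_Suc_right del: funpow.simps)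

lemma birkhoff_sum_diff_const: "birkhoff_sum (\<lambda>x. g x - c) n x = birkhoff_sum g n x - real n * c"
  by (simp add: birkhoff_sum_def sum_subtractf)

lemma birkhoff_sum_const_diff: "birkhoff_sum (\<lambda>x. c - g x) n x = real n * c - birkhoff_sum g n x"
  by (simp add: birkhoff_sum_def sum_subtractf)

lemma measurable_birkhoff_sum [measurable]:
  "g \<in> borel_measurable M \<Longrightarrow> birkhoff_sum g n \<in> borel_measurable M"
  unfolding birkhoff_sum_def
  by (intro borel_measurable_sum measurable_compose[OF measurable_funpow[OF measurable_T]])

lemma integrable_birkhoff_sum: "integrable M g \<Longrightarrow> integrable M (birkhoff_sum g n)"
  unfolding birkhoff_sum_def by (auto intro!: integrable_funpow)

definition max_birkhoff_sum :: "('a \<Rightarrow> real) \<Rightarrow> nat \<Rightarrow> 'a \<Rightarrow> real" where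
  "max_birkhoff_sum g N x = Max ((\<lambda>k. birkhoff_sum g k x) ` {..N})"

lemma birkhoff_sum_le_max: "k \<le> N \<Longrightarrow> birkhoff_sum g k x \<le> max_birkhoff_sum g N x"
  unfolding max_birkhoff_sum_def by (rule Max_ge) auto

lemma max_birkhoff_sum_nonneg: "0 \<le> max_birkhoff_sum g N x"
  using birkhoff_sum_le_max[of 0 N g x] by (simp add: birkhoff_sum_def)

lemma max_birkhoff_sum_attained:
  obtains k where "k \<le> N" "max_birkhoff_sum g N x = birkhoff_sum g k x"
proof -
  have "max_birkhoff_sum g N x \<in> (\<lambda>k. birkhoff_sum g k x) ` {..N}"
    unfolding max_birkhoff_sum_def by (rule Max_in) auto
  then show ?thesis using that by auto
qed

lemma measurable_max_birkhoff_sum [measurable]: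
  "g \<in> borel_measurable M \<Longrightarrow> max_birkhoff_sum g N \<in> borel_measurable M"
  unfolding max_birkhoff_sum_def by measurable

lemma integrable_max_birkhoff_sum:
  assumes g: "integrable M g"
  shows "integrable M (max_birkhoff_sum g N)"
proof (rule Bochner_Integration.integrable_bound)
  show "integrable M (birkhoff_sum (\<lambda>x. \<bar>g x\<bar>) N)" using g by (intro integrable_birkhoff_sum) auto
  show "AE x in M. norm (max_birkhoff_sum g N x) \<le> norm (birkhoff_sum (\<lambda>x. \<bar>g x\<bar>) N x)"
  proof (rule AE_I2)
    fix x
    obtain k where k: "k \<le> N" "max_birkhoff_sum g N x = birkhoff_sum g k x"
      by (rule max_birkhoff_sum_attained)
    have "\<bar>birkhoff_sum g k x\<bar> \<le> birkhoff_sum (\<lambda>x. \<bar>g x\<bar>) k x"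
      unfolding birkhoff_sum_def by (rule sum_abs)
    also have "\<dots> \<le> birkhoff_sum (\<lambda>x. \<bar>g x\<bar>) N x"
      unfolding birkhoff_sum_def using k(1) by (intro sum_mono2) auto
    finally show "norm (max_birkhoff_sum g N x) \<le> norm (birkhoff_sum (\<lambda>x. \<bar>g x\<bar>) N x)"
      using k(2) by simp
  qed
qed (use g in auto)

lemma max_birkhoff_sum_diff_le:
  "max_birkhoff_sum g N x - max_birkhoff_sum g N (T x)
    \<le> (if max_birkhoff_sum g N x > 0 then g x else 0)"
proof (cases "max_birkhoff_sum g N x > 0")
  case True
  obtain k where k: "k \<le> N" "max_birkhoff_sum g N x = birkhoff_sum g k x"
    by (rule max_birkhoff_sum_attained)
  with True obtain j where j: "k = Suc j" by (cases k) (auto simp: birkhoff_sum_def)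
  have "birkhoff_sum g k x = g x + birkhoff_sum g j (T x)" by (simp add: j birkhoff_sum_Suc)
  also have "\<dots> \<le> g x + max_birkhoff_sum g N (T x)"
    using birkhoff_sum_le_max[of j N g "T x"] j k by simp
  finally show ?thesis using True k by simp
next
  case False
  then show ?thesis using max_birkhoff_sum_nonneg[of g N "T x"] by simp
qed

lemma maximal_ergodic_lemma:
  assumes g: "integrable M g"
  shows "0 \<le> (\<integral>x. (if max_birkhoff_sum g N x > 0 then g x else 0) \<partial>M)"
proof -
  have [measurable]: "g \<in> borel_measurable M" using g by auto
  have i: "integrable M (max_birkhoff_sum g N)" using integrable_max_birkhoff_sum[OF g] .
  have iT: "integrable M (\<lambda>x. max_birkhoff_sum g N (T x))"
    using integrable_funpow[OF i, of 1] by simp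
  have "0 = (\<integral>x. max_birkhoff_sum g N x - max_birkhoff_sum g N (T x) \<partial>M)"
    using integral_funpow[of "max_birkhoff_sum g N" 1] i iT by simp
  also have "\<dots> \<le> (\<integral>x. (if max_birkhoff_sum g N x > 0 then g x else 0) \<partial>M)"
  proof (rule integral_mono)
    show "integrable M (\<lambda>x. if max_birkhoff_sum g N x > 0 then g x else 0)"
      by (rule Bochner_Integration.integrable_bound[OF g]) auto
  qed (use i iT max_birkhoff_sum_diff_le in auto)
  finally show ?thesis .
qed

lemma integral_nonneg_if_birkhoff_sum_pos:
  assumes g: "integrable M g" and pos: "AE x in M. \<exists>k. birkhoff_sum g k x > 0"
  shows "0 \<le> integral\<^sup>L M g"
proof -
  have [measurable]: "g \<in> borel_measurable M" using g by auto
  have "(\<lambda>N. \<integral>x. (if max_birkhoff_sum g N x > 0 then g x else 0) \<partial>M) \<longlonglongrightarrow> integral\<^sup>L M g"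
  proof (rule integral_dominated_convergence[where w="\<lambda>x. \<bar>g x\<bar>"])
    show "AE x in M. (\<lambda>N. if max_birkhoff_sum g N x > 0 then g x else 0) \<longlonglongrightarrow> g x"
      using pos
    proof eventually_elim
      case (elim x)
      then obtain k where k: "birkhoff_sum g k x > 0" by auto
      have "eventually (\<lambda>N. max_birkhoff_sum g N x > 0) sequentially"
      proof (rule eventually_sequentiallyI)
        show "max_birkhoff_sum g N x > 0" if "k \<le> N" for N
          using k birkhoff_sum_le_max[OF that, of g x] by linarith
      qed
      then show ?case by (rule tendsto_eventually[OF eventually_mono]) simp
    qed
  qed (use g in auto)
  then show ?thesis
    by (rule LIMSEQ_le_const) (use maximal_ergodic_lemma[OF g] in auto)
qed

text \<open>The set where the sums are unbounded is invariant, hence null or conull, and conull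
  would make the integral nonnegative.\<close>

lemma bdd_above_birkhoff_sum_AE:
  assumes erg: "ergodic_for M T M" and g: "integrable M g" and neg: "integral\<^sup>L M g < 0"
  shows "AE x in M. bdd_above (range (\<lambda>n. birkhoff_sum g n x))"
proof -
  have [measurable]: "g \<in> borel_measurable M" using g by auto
  define E where "E = {x \<in> space M. \<not> bdd_above (range (\<lambda>n. birkhoff_sum g n x))}"
  have E: "E \<in> sets M"
    unfolding E_def bdd_above_range_iff_nat by measurable
  have "bdd_above (range (\<lambda>n. birkhoff_sum g n (T x))) \<longleftrightarrow>
      bdd_above (range (\<lambda>n. birkhoff_sum g n x))" for x
    using bdd_above_range_Suc_diff_iff[of "\<lambda>n. birkhoff_sum g n x" "g x"]
    by (simp add: birkhoff_sum_Suc)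
  then have "T -` E \<inter> space M = E"
    by (auto simp: E_def measurable_space[OF measurable_T])
  then have "measure M E = 0 \<or> measure M E = 1"
    using erg E unfolding ergodic_for_def by blast
  moreover have "measure M E \<noteq> 1"
  proof
    assume "measure M E = 1"
    then have "AE x in M. x \<in> E" using E by (intro AE_prob_1) simp
    then have "AE x in M. \<exists>k. birkhoff_sum g k x > 0"
      by eventually_elim (auto simp: E_def bdd_above_def not_le)
    from integral_nonneg_if_birkhoff_sum_pos[OF g this] neg show False by simp
  qed
  ultimately have "E \<in> null_sets M" using E by (simp add: emeasure_eq_measure null_sets_def)
  from AE_not_in[OF this] AE_space show ?thesis
    by eventually_elim (auto simp: E_def)
qed

theorem birkhoff_ergodic_theorem:
  assumes erg: "ergodic_for M T M" and f: "integrable M f"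
  shows "AE x in M. (\<lambda>n. birkhoff_sum f n x / real n) \<longlonglongrightarrow> integral\<^sup>L M f"
proof -
  define L where "L = integral\<^sup>L M f"
  have "AE x in M.
      bdd_above (range (\<lambda>n. birkhoff_sum (\<lambda>x. f x - (L + 1 / real (Suc k))) n x)) \<and>
      bdd_above (range (\<lambda>n. birkhoff_sum (\<lambda>x. (L - 1 / real (Suc k)) - f x) n x))" for k
    using f by (intro AE_conjI bdd_above_birkhoff_sum_AE[OF erg]) (auto simp: L_def prob_space)
  then have "AE x in M. \<forall>k.
      bdd_above (range (\<lambda>n. birkhoff_sum (\<lambda>x. f x - (L + 1 / real (Suc k))) n x)) \<and>
      bdd_above (range (\<lambda>n. birkhoff_sum (\<lambda>x. (L - 1 / real (Suc k)) - f x) n x))"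
    unfolding AE_all_countable ..
  then show ?thesis unfolding L_def[symmetric]
    by eventually_elim
      (rule tendsto_average_of_bdd_deviations,
        auto simp: birkhoff_sum_diff_const birkhoff_sum_const_diff)
qed

end

section \<open>Setwise limits of finitely additive set functions\<close>

text \<open>The setting of the Vitali-Hahn-Saks theorem; \<open>\<nu>\<close> is shown to be sigma-additive by a
  gliding hump argument.\<close>

locale setwise_limit = sigma_algebra \<Omega> M for \<Omega> :: "'a set" and M +
  fixes \<mu> :: "nat \<Rightarrow> 'a set \<Rightarrow> real" and \<nu> :: "'a set \<Rightarrow> real" and K :: real
  assumes approx_nonneg: "\<And>n A. A \<in> M \<Longrightarrow> 0 \<le> \<mu> n A"
    and approx_additive: "\<And>n. additive M (\<mu> n)"
    and approx_bounded: "\<And>n. \<mu> n \<Omega> \<le> K"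
    and approx_continuous: "\<And>n A. range A \<subseteq> M \<Longrightarrow> decseq A \<Longrightarrow> (\<Inter>i. A i) = {} \<Longrightarrow>
      (\<lambda>i. \<mu> n (A i)) \<longlonglongrightarrow> 0"
    and approx_tendsto: "\<And>A. A \<in> M \<Longrightarrow> (\<lambda>n. \<mu> n A) \<longlonglongrightarrow> \<nu> A"
begin

lemma approx_diff:
  assumes "A \<in> M" "B \<in> M" "B \<subseteq> A"
  shows "\<mu> n (A - B) = \<mu> n A - \<mu> n B"
proof -
  have "\<mu> n ((A - B) \<union> B) = \<mu> n (A - B) + \<mu> n B"
    by (rule additiveD[OF approx_additive]) (use assms in auto)
  moreover have "(A - B) \<union> B = A" using assms(3) by blast
  ultimately show ?thesis by simp
qed

lemma approx_mono: "A \<in> M \<Longrightarrow> B \<in> M \<Longrightarrow> B \<subseteq> A \<Longrightarrow> \<mu> n B \<le> \<mu> n A"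
  using approx_diff[of A B n] approx_nonneg[of "A - B" n] by auto

lemma approx_le_bound: "A \<in> M \<Longrightarrow> \<mu> n A \<le> K"
  using approx_mono[of \<Omega> A n] approx_bounded[of n] sets_into_space by auto

lemma approx_sum_disjoint:
  assumes "finite I" "F ` I \<subseteq> M" "disjoint_family_on F I"
  shows "(\<Sum>i\<in>I. \<mu> n (F i)) = \<mu> n (\<Union>i\<in>I. F i)"
  using assms
proof (induction I rule: finite_induct)
  case empty
  show ?case using additiveD[OF approx_additive, of "{}" "{}" n] by simp
next
  case (insert i I)
  have IH: "(\<Sum>j\<in>I. \<mu> n (F j)) = \<mu> n (\<Union>j\<in>I. F j)"
    using insert.IH insert.prems by (auto intro: disjoint_family_on_mono[OF subset_insertI])
  have "F i \<inter> (\<Union>j\<in>I. F j) = {}"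
    using insert.hyps(2) insert.prems(2) by (auto simp: disjoint_family_on_def)
  moreover have "(\<Union>j\<in>I. F j) \<in> M" using insert.prems(1) insert.hyps(1) by (intro finite_UN) auto
  ultimately have "\<mu> n (F i \<union> (\<Union>j\<in>I. F j)) = \<mu> n (F i) + \<mu> n (\<Union>j\<in>I. F j)"
    using insert.prems(1) by (intro additiveD[OF approx_additive]) auto
  then show ?case using insert.hyps IH by simp
qed

lemma limit_nonneg: "A \<in> M \<Longrightarrow> 0 \<le> \<nu> A"
  using LIMSEQ_le_const[OF approx_tendsto] approx_nonneg by blast

lemma limit_mono: "A \<in> M \<Longrightarrow> B \<in> M \<Longrightarrow> B \<subseteq> A \<Longrightarrow> \<nu> B \<le> \<nu> A"
  using LIMSEQ_le[OF approx_tendsto approx_tendsto] approx_mono by blast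

lemma limit_additive: "additive M \<nu>"
  unfolding additive_def
proof (intro ballI impI)
  fix A B assume "A \<in> M" "B \<in> M" "A \<inter> B = {}"
  then have "(\<lambda>n. \<mu> n (A \<union> B)) \<longlonglongrightarrow> \<nu> A + \<nu> B"
    using tendsto_add[OF approx_tendsto approx_tendsto] additiveD[OF approx_additive] by simp
  then show "\<nu> (A \<union> B) = \<nu> A + \<nu> B" using approx_tendsto[of "A \<union> B"] \<open>A \<in> M\<close> \<open>B \<in> M\<close>
    using LIMSEQ_unique by blast
qed

lemma limit_empty: "\<nu> {} = 0"
  using additiveD[OF limit_additive, of "{}" "{}"] by simp

lemma limit_sum_disjoint_le_bound:
  assumes "finite I" "F ` I \<subseteq> M" "disjoint_family_on F I"
  shows "(\<Sum>i\<in>I. \<nu> (F i)) \<le> K"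
proof (rule LIMSEQ_le_const2)
  show "(\<lambda>n. \<Sum>i\<in>I. \<mu> n (F i)) \<longlonglongrightarrow> (\<Sum>i\<in>I. \<nu> (F i))"
    using assms(2) by (intro tendsto_sum approx_tendsto) auto
  have "(\<Union>i\<in>I. F i) \<in> M" using assms(1,2) by (intro finite_UN) auto
  then have "(\<Sum>i\<in>I. \<mu> n (F i)) \<le> K" for n
    using approx_sum_disjoint[OF assms, of n] approx_le_bound by simp
  then show "\<exists>N. \<forall>n\<ge>N. (\<Sum>i\<in>I. \<mu> n (F i)) \<le> K" by blast
qed

text \<open>Grouping the indices by their residue mod N yields N disjoint sets, each of limit mass at
  least \<open>\<epsilon>\<close> along a subsequence, which is impossible once N \<epsilon> > K.\<close>

lemma disjoint_eventually_small:
  fixes B :: "nat \<Rightarrow> 'a set"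
  assumes B: "range B \<subseteq> M" "disjoint_family B" and t: "strict_mono t" and "0 < \<epsilon>"
  shows "\<exists>j. \<mu> (t j) (B j) < \<epsilon>"
proof (rule ccontr)
  assume "\<not> ?thesis"
  then have large: "\<epsilon> \<le> \<mu> (t j) (B j)" for j by (simp add: not_less)
  obtain N :: nat where N: "K < real N * \<epsilon>"
    using reals_Archimedean3[OF \<open>0 < \<epsilon>\<close>] by blast
  define F where "F r = (\<Union>j\<in>{j. j mod N = r}. B j)" for r
  have F: "F r \<in> M" for r unfolding F_def using B(1) by (intro countable_UN') auto
  have "B j \<inter> B j' = {}" if "j mod N \<noteq> j' mod N" for j j'
  proof -
    from that have "j \<noteq> j'" by auto
    then show ?thesis using B(2) by (simp add: disjoint_family_on_def)
  qed
  then have disj: "disjoint_family_on F {..<N}"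
    unfolding disjoint_family_on_def F_def by blast
  have "\<epsilon> \<le> \<nu> (F r)" if "r < N" for r
  proof -
    have "strict_mono (\<lambda>s. t (r + N * s))"
      using that t by (intro strict_monoI) (auto simp: strict_mono_less)
    from LIMSEQ_subseq_LIMSEQ[OF approx_tendsto[OF F] this]
    have "(\<lambda>s. \<mu> (t (r + N * s)) (F r)) \<longlonglongrightarrow> \<nu> (F r)" by (simp add: o_def)
    moreover have "\<epsilon> \<le> \<mu> (t (r + N * s)) (F r)" for s
    proof -
      have "(r + N * s) mod N = r" using that by simp
      then have "B (r + N * s) \<subseteq> F r" unfolding F_def by blast
      then have "\<mu> (t (r + N * s)) (B (r + N * s)) \<le> \<mu> (t (r + N * s)) (F r)"
        using B(1) by (intro approx_mono[OF F]) auto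
      then show ?thesis using large[of "r + N * s"] by linarith
    qed
    ultimately show ?thesis by (intro LIMSEQ_le_const) auto
  qed
  then have "real N * \<epsilon> \<le> (\<Sum>r<N. \<nu> (F r))"
    using sum_bounded_below[of "{..<N}" \<epsilon> "\<lambda>r. \<nu> (F r)"] by simp
  also have "\<dots> \<le> K" by (rule limit_sum_disjoint_le_bound) (use F disj in auto)
  finally show False using N by simp
qed

text \<open>Alternately let the time grow until \<open>\<mu> t (A k) > 3\<delta>/4\<close> (possible as \<open>\<nu> (A k) \<ge> \<delta>\<close>)
  and the set index grow until \<open>\<mu> t (A k) < \<delta>/4\<close> (continuity of \<open>\<mu> t\<close> at the empty set).\<close>

lemma hump_indices:
  assumes A: "range A \<subseteq> M" "decseq A" "(\<Inter>i. A i) = {}"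
    and large: "\<And>k. \<delta> \<le> \<nu> (A k)" and "0 < \<delta>"
  obtains k t :: "nat \<Rightarrow> nat" where "strict_mono k" "strict_mono t"
    "\<And>j. 3 * \<delta> / 4 < \<mu> (t j) (A (k j))" "\<And>j. \<mu> (t j) (A (k (Suc j))) < \<delta> / 4"
proof -
  have later: "\<exists>n'>n. P n'" if "eventually P sequentially" for P :: "nat \<Rightarrow> bool" and n
    using eventually_happens'[OF sequentially_bot eventually_conj[OF eventually_gt_at_top that]]
    by blast
  have rise: "\<exists>n'>n. 3 * \<delta> / 4 < \<mu> n' (A k)" for k n
    using large[of k] \<open>0 < \<delta>\<close> A(1)
    by (intro later order_tendstoD(1)[OF approx_tendsto]) auto
  have fall: "\<exists>k'>k. \<mu> n (A k') < \<delta> / 4" for k n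
    using \<open>0 < \<delta>\<close> by (intro later order_tendstoD(2)[OF approx_continuous[OF A]]) auto
  have "\<exists>kt. \<forall>j. 3 * \<delta> / 4 < \<mu> (snd (kt j)) (A (fst (kt j))) \<and>
      (fst (kt j) < fst (kt (Suc j)) \<and> snd (kt j) < snd (kt (Suc j)) \<and>
       \<mu> (snd (kt j)) (A (fst (kt (Suc j)))) < \<delta> / 4)"
  proof (rule dependent_nat_choice)
    show "\<exists>x. 3 * \<delta> / 4 < \<mu> (snd x) (A (fst x))"
      using rise[of 0 0] by auto
    fix x :: "nat \<times> nat" and j
    obtain k' where k': "fst x < k'" "\<mu> (snd x) (A k') < \<delta> / 4" using fall by blast
    obtain n' where n': "snd x < n'" "3 * \<delta> / 4 < \<mu> n' (A k')" using rise by blast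
    show "\<exists>y. 3 * \<delta> / 4 < \<mu> (snd y) (A (fst y)) \<and>
        (fst x < fst y \<and> snd x < snd y \<and> \<mu> (snd x) (A (fst y)) < \<delta> / 4)"
      using k' n' by (intro exI[of _ "(k', n')"]) auto
  qed
  then obtain kt where kt: "\<forall>j. 3 * \<delta> / 4 < \<mu> (snd (kt j)) (A (fst (kt j))) \<and>
      fst (kt j) < fst (kt (Suc j)) \<and> snd (kt j) < snd (kt (Suc j)) \<and>
      \<mu> (snd (kt j)) (A (fst (kt (Suc j)))) < \<delta> / 4" ..
  show ?thesis
  proof (rule that[of "\<lambda>j. fst (kt j)" "\<lambda>j. snd (kt j)"])
    show "strict_mono (\<lambda>j. fst (kt j))" "strict_mono (\<lambda>j. snd (kt j))"
      using kt by (simp_all add: strict_mono_Suc_iff)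
  qed (use kt in simp_all)
qed

lemma gliding_hump:
  assumes A: "range A \<subseteq> M" "decseq A" "(\<Inter>i. A i) = {}"
    and large: "\<And>k. \<delta> \<le> \<nu> (A k)" and "0 < \<delta>"
  obtains B :: "nat \<Rightarrow> 'a set" and t :: "nat \<Rightarrow> nat"
  where "range B \<subseteq> M" "disjoint_family B" "strict_mono t" "\<And>j. \<delta> / 2 < \<mu> (t j) (B j)"
proof -
  obtain k t where k: "strict_mono k" and t: "strict_mono t"
    and hump: "\<And>j. 3 * \<delta> / 4 < \<mu> (t j) (A (k j))" "\<And>j. \<mu> (t j) (A (k (Suc j))) < \<delta> / 4"
    using hump_indices[OF A large \<open>0 < \<delta>\<close>] by blast
  define B where "B j = A (k j) - A (k (Suc j))" for j
  have A_sets: "A i \<in> M" for i using A(1) by auto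
  have B_hump: "\<delta> / 2 < \<mu> (t j) (B j)" for j
  proof -
    have "A (k (Suc j)) \<subseteq> A (k j)"
      using A(2) k by (simp add: decseqD strict_mono_leD)
    then have "\<mu> (t j) (B j) = \<mu> (t j) (A (k j)) - \<mu> (t j) (A (k (Suc j)))"
      unfolding B_def by (intro approx_diff A_sets)
    then show ?thesis using hump[of j] by simp
  qed
  have B_disj: "disjoint_family B"
    unfolding disjoint_family_on_def
  proof (intro ballI impI)
    fix i j :: nat assume "i \<noteq> j"
    have disj: "B j \<inter> B i = {}" if "i < j" for i j
    proof -
      have "k (Suc i) \<le> k j" using that k by (simp add: strict_mono_less_eq)
      then have "B j \<subseteq> A (k (Suc i))" using A(2) by (auto simp: B_def decseq_def)
      then show ?thesis by (auto simp: B_def)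
    qed
    show "B i \<inter> B j = {}"
      using \<open>i \<noteq> j\<close> disj[of i j] disj[of j i] by (cases "i < j") (auto simp: Int_commute)
  qed
  have "range B \<subseteq> M" using A_sets by (auto simp: B_def)
  from that[OF this B_disj t B_hump] show ?thesis .
qed

lemma limit_empty_continuous:
  assumes A: "range A \<subseteq> M" "decseq A" "(\<Inter>i. A i) = {}"
  shows "(\<lambda>i. \<nu> (A i)) \<longlonglongrightarrow> 0"
  unfolding LIMSEQ_iff
proof (intro allI impI)
  fix r :: real assume "0 < r"
  have A_sets: "A i \<in> M" for i using A(1) by auto
  have "\<exists>k. \<nu> (A k) < r"
  proof (rule ccontr)
    assume "\<nexists>k. \<nu> (A k) < r"
    then have "r \<le> \<nu> (A k)" for k by (simp add: not_less)
    from gliding_hump[OF A this \<open>0 < r\<close>]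
    obtain B :: "nat \<Rightarrow> 'a set" and t :: "nat \<Rightarrow> nat" where
      "range B \<subseteq> M" "disjoint_family B" "strict_mono t" "\<And>j. r / 2 < \<mu> (t j) (B j)"
      by blast
    with disjoint_eventually_small[of B t "r / 2"] \<open>0 < r\<close> show False
      by (meson half_gt_zero less_asym)
  qed
  then obtain k where k: "\<nu> (A k) < r" ..
  have "\<nu> (A j) \<le> \<nu> (A k)" if "k \<le> j" for j
    using A(2) that by (intro limit_mono A_sets) (auto simp: decseq_def)
  then have "norm (\<nu> (A j) - 0) < r" if "k \<le> j" for j
    using k limit_nonneg[OF A_sets, of j] that by fastforce
  then show "\<exists>N. \<forall>j\<ge>N. norm (\<nu> (A j) - 0) < r" by blast
qed

lemma limit_countably_additive: "countably_additive M (\<lambda>A. ennreal (\<nu> A))"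
proof (rule empty_continuous_imp_countably_additive)
  show "positive M (\<lambda>A. ennreal (\<nu> A))" by (simp add: positive_def limit_empty)
  show "additive M (\<lambda>A. ennreal (\<nu> A))"
    using limit_additive limit_nonneg by (auto simp: additive_def ennreal_plus)
  show "(\<lambda>i. ennreal (\<nu> (A i))) \<longlonglongrightarrow> 0"
    if "range A \<subseteq> M" "decseq A" "(\<Inter>i. A i) = {}" for A
    using tendsto_ennrealI[OF limit_empty_continuous[OF that]] by simp
qed simp

end

lemma image_funpow_eq_vimage:
  assumes f: "\<And>x. x \<in> X \<Longrightarrow> f x \<in> X" and g: "\<And>x. x \<in> X \<Longrightarrow> g x \<in> X"
    and fg: "\<And>x. x \<in> X \<Longrightarrow> f (g x) = x" and gf: "\<And>x. x \<in> X \<Longrightarrow> g (f x) = x"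
    and A: "A \<subseteq> X"
  shows "(f ^^ n) ` A = (g ^^ n) -` A \<inter> X"
proof (induction n)
  case 0
  then show ?case using A by auto
next
  case (Suc n)
  have "(f ^^ Suc n) ` A = f ` ((f ^^ n) ` A)" by (simp add: image_comp)
  also have "\<dots> = f ` ((g ^^ n) -` A \<inter> X)" by (simp only: Suc)
  also have "\<dots> = (g ^^ Suc n) -` A \<inter> X"
  proof
    show "f ` ((g ^^ n) -` A \<inter> X) \<subseteq> (g ^^ Suc n) -` A \<inter> X"
      using f gf by (auto simp: funpow_Suc_right simp del: funpow.simps)
    show "(g ^^ Suc n) -` A \<inter> X \<subseteq> f ` ((g ^^ n) -` A \<inter> X)"
    proof
      fix x assume x: "x \<in> (g ^^ Suc n) -` A \<inter> X"
      then have "g x \<in> (g ^^ n) -` A \<inter> X"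
        using g by (auto simp: funpow_Suc_right simp del: funpow.simps)
      then show "x \<in> f ` ((g ^^ n) -` A \<inter> X)" using fg x by (metis IntE image_eqI)
    qed
  qed
  finally show ?case .
qed

lemma iterz_zero [simp]: "iterz M T 0 x = x"
  by (simp add: iterz_def)

locale invertible_system = prob_space M for M :: "'a measure" +
  fixes T :: "'a \<Rightarrow> 'a"
  assumes bij_T: "bij_betw T (space M) (space M)"
    and measurable_T [measurable]: "T \<in> M \<rightarrow>\<^sub>M M"
    and measurable_T_inv [measurable]: "the_inv_into (space M) T \<in> M \<rightarrow>\<^sub>M M"
begin

abbreviation T_inv :: "'a \<Rightarrow> 'a" where "T_inv \<equiv> the_inv_into (space M) T"

lemma T_space: "x \<in> space M \<Longrightarrow> T x \<in> space M"
  using measurable_space[OF measurable_T] .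

lemma T_inv_space: "x \<in> space M \<Longrightarrow> T_inv x \<in> space M"
  using measurable_space[OF measurable_T_inv] .

lemma T_inv_T: "x \<in> space M \<Longrightarrow> T_inv (T x) = x"
  using bij_T by (simp add: bij_betw_def the_inv_into_f_f)

lemma T_T_inv: "x \<in> space M \<Longrightarrow> T (T_inv x) = x"
  using bij_T by (simp add: bij_betw_def f_the_inv_into_f)

lemma image_funpow_T: "A \<subseteq> space M \<Longrightarrow> (T ^^ n) ` A = (T_inv ^^ n) -` A \<inter> space M"
  by (rule image_funpow_eq_vimage) (auto simp: T_space T_inv_space T_inv_T T_T_inv)

lemma image_funpow_T_inv: "A \<subseteq> space M \<Longrightarrow> (T_inv ^^ n) ` A = (T ^^ n) -` A \<inter> space M"
  by (rule image_funpow_eq_vimage) (auto simp: T_space T_inv_space T_inv_T T_T_inv)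

lemma iterz_of_nat: "iterz M T (int n) = T ^^ n"
  by (simp add: iterz_def)

lemma iterz_minus_of_nat: "iterz M T (- int n) = T_inv ^^ n"
  by (cases "n = 0") (simp_all add: iterz_def)

lemma iterz_cases:
  obtains n where "iterz M T i = T ^^ n" "iterz M T (- i) = T_inv ^^ n"
  | n where "iterz M T i = T_inv ^^ n" "iterz M T (- i) = T ^^ n"
proof (cases i rule: int_cases2)
  case (nonneg n)
  then show ?thesis using that(1)[of n] by (simp add: iterz_of_nat iterz_minus_of_nat)
next
  case (nonpos n)
  then show ?thesis using that(2)[of n] by (simp add: iterz_of_nat iterz_minus_of_nat)
qed

lemma measurable_iterz [measurable]: "iterz M T i \<in> M \<rightarrow>\<^sub>M M"
  by (cases i rule: iterz_cases) (auto intro: measurable_funpow)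

lemma image_iterz: "C \<subseteq> space M \<Longrightarrow> iterz M T i ` C = iterz M T (- i) -` C \<inter> space M"
  by (cases i rule: iterz_cases) (auto simp: image_funpow_T image_funpow_T_inv)

lemma iterz_T:
  assumes "x \<in> space M" shows "iterz M T k (T x) = iterz M T (k + 1) x"
proof (cases k rule: int_cases)
  case (nonneg n)
  then have "k + 1 = int (Suc n)" by simp
  then show ?thesis using nonneg by (simp only: iterz_of_nat funpow_Suc_right o_apply)
next
  case (neg n)
  then have "k + 1 = - int n" by simp
  then show ?thesis using neg T_inv_T[OF assms]
    by (simp only: iterz_minus_of_nat funpow_Suc_right o_apply)
qed

lemma iterz_invariant:
  assumes A: "T -` A \<inter> space M = A" and x: "x \<in> space M"
  shows "iterz M T i x \<in> A \<longleftrightarrow> x \<in> A"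
proof -
  have step_T: "T y \<in> A \<longleftrightarrow> y \<in> A" if "y \<in> space M" for y
    using that by (subst (2) A[symmetric]) auto
  have step: "T y \<in> A \<longleftrightarrow> y \<in> A" "T_inv y \<in> A \<longleftrightarrow> y \<in> A" if "y \<in> space M" for y
    using step_T[OF that] step_T[OF T_inv_space[OF that]] T_T_inv[OF that] by auto
  have "(T ^^ n) x \<in> A \<longleftrightarrow> x \<in> A" for n
  proof (induction n)
    case (Suc n)
    then show ?case
      using step(1)[OF measurable_space[OF measurable_funpow[OF measurable_T] x]] by simp
  qed simp
  moreover have "(T_inv ^^ n) x \<in> A \<longleftrightarrow> x \<in> A" for n
  proof (induction n)
    case (Suc n)
    then show ?case
      using step(2)[OF measurable_space[OF measurable_funpow[OF measurable_T_inv] x]] by simp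
  qed simp
  ultimately show ?thesis by (cases i rule: iterz_cases) auto
qed

lemma image_iterz_invariant:
  assumes A: "T -` A \<inter> space M = A"
  shows "iterz M T i ` A = A"
proof -
  have "A \<subseteq> space M" using Int_lower2[of "T -` A" "space M"] by (simp only: A)
  then show ?thesis using image_iterz[of A i] iterz_invariant[OF A] by auto
qed

lemma invariant_if_T_inv_invariant: "T_inv -` A \<inter> space M = A \<Longrightarrow> T -` A \<inter> space M = A"
proof -
  assume A: "T_inv -` A \<inter> space M = A"
  have "T x \<in> A \<longleftrightarrow> x \<in> A" if "x \<in> space M" for x
    using eqset_imp_iff[OF A[symmetric], of "T x"] T_space[OF that] T_inv_T[OF that] by simp
  then show ?thesis using A by auto
qed

lemma measure_image_funpow:
  "A \<in> sets M \<Longrightarrow> measure M ((T ^^ i) ` A) = measure (distr M M (T_inv ^^ i)) A"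
  by (simp add: measure_distr measurable_funpow image_funpow_T sets.sets_into_space)

lemma cesaro_avg_eq_distr:
  "A \<in> sets M \<Longrightarrow> cesaro_avg M T A n = (\<Sum>i<n. measure (distr M M (T_inv ^^ i)) A) / real n"
  by (simp add: cesaro_avg_def measure_image_funpow)

lemma cesaro_avg_invariant:
  assumes "T -` A \<inter> space M = A" "0 < n"
  shows "cesaro_avg M T A n = measure M A"
proof -
  have "(T ^^ i) ` A = A" for i
    using image_iterz_invariant[OF assms(1), of "int i"] by (simp add: iterz_of_nat)
  then show ?thesis using assms(2) by (simp add: cesaro_avg_def)
qed

lemma cesaro_avg_vimage_T_Suc:
  assumes A: "A \<in> sets M"
  defines "A' \<equiv> T -` A \<inter> space M"
  shows "cesaro_avg M T A' (Suc n)
    = measure M A' / real (Suc n) + real n / real (Suc n) * cesaro_avg M T A n"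
proof -
  have "T ` A' = A"
    using image_funpow_T[of A' 1] sets.sets_into_space[OF A]
    by (auto simp: A'_def T_inv_T T_T_inv T_inv_space)
  then have "(T ^^ Suc i) ` A' = (T ^^ i) ` A" for i
    by (simp only: funpow_Suc_right image_comp[symmetric])
  then have "(\<Sum>i<Suc n. measure M ((T ^^ i) ` A'))
      = measure M A' + (\<Sum>i<n. measure M ((T ^^ i) ` A))"
    unfolding sum.lessThan_Suc_shift by simp
  moreover have "real n / real (Suc n) * ((\<Sum>i<n. measure M ((T ^^ i) ` A)) / real n)
      = (\<Sum>i<n. measure M ((T ^^ i) ` A)) / real (Suc n)"
    by (cases "n = 0") auto
  ultimately show ?thesis
    unfolding cesaro_avg_def by (simp only: add_divide_distrib)
qed

definition two_sided_average :: "('a \<Rightarrow> real) \<Rightarrow> nat \<Rightarrow> nat \<Rightarrow> 'a \<Rightarrow> real" where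
  "two_sided_average f m n \<omega> = (\<Sum>i\<in>{- int m..int n}. f (iterz M T i \<omega>)) / real (m + n + 1)"

lemma measurable_two_sided_average [measurable]:
  assumes [measurable]: "f \<in> borel_measurable M"
  shows "two_sided_average f m n \<in> borel_measurable M"
  unfolding two_sided_average_def by measurable

lemma two_sided_average_const:
  assumes "\<And>i. f (iterz M T i \<omega>) = c"
  shows "two_sided_average f m n \<omega> = c"
  by (simp only: two_sided_average_def assms average_const_int_interval)

lemma two_sided_average_indicator_bounds:
  "0 \<le> two_sided_average (indicator C) m n \<omega> \<and> two_sided_average (indicator C) m n \<omega> \<le> 1"
proof -
  have "(\<Sum>i\<in>{- int m..int n}. indicator C (iterz M T i \<omega>)) \<le> (\<Sum>i\<in>{- int m..int n}. 1 :: real)"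
    by (intro sum_mono) (simp add: indicator_def)
  then show ?thesis
    unfolding two_sided_average_def average_const_int_interval[of m n 1, symmetric]
    by (intro conjI divide_right_mono divide_nonneg_nonneg sum_nonneg) auto
qed

text \<open>P(B \<inter> T^i C) is the integral over B of the indicator of C composed with T^(-i);
  reflecting i to -i swaps the roles of m and n.\<close>

lemma mixing_average_eq_integral:
  assumes B [measurable]: "B \<in> sets M" and C [measurable]: "C \<in> sets M"
  shows "(\<Sum>i\<in>{- int m..int n}. measure M (B \<inter> iterz M T i ` C)) / real (m + n + 1)
    = (\<integral>\<omega>. indicator B \<omega> * two_sided_average (indicator C) n m \<omega> \<partial>M)"
proof -
  have measure_eq: "measure M (B \<inter> iterz M T i ` C)
      = (\<integral>\<omega>. indicator B \<omega> * indicator C (iterz M T (- i) \<omega>) \<partial>M)" for i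
  proof -
    have "B \<inter> iterz M T i ` C = B \<inter> (iterz M T (- i) -` C \<inter> space M)"
      using image_iterz[OF sets.sets_into_space[OF C]] by simp
    moreover have "B \<inter> (iterz M T (- i) -` C \<inter> space M) \<in> sets M" by measurable
    ultimately have "measure M (B \<inter> iterz M T i ` C)
        = integral\<^sup>L M (indicator (B \<inter> (iterz M T (- i) -` C \<inter> space M)))"
      by simp
    also have "\<dots> = (\<integral>\<omega>. indicator B \<omega> * indicator C (iterz M T (- i) \<omega>) \<partial>M)"
      by (rule Bochner_Integration.integral_cong) (auto simp: indicator_def)
    finally show ?thesis .
  qed
  have "integrable M (\<lambda>\<omega>. indicator B \<omega> * indicator C (iterz M T (- i) \<omega>) :: real)" for i
    by (rule integrable_const_bound[where B=1]) (auto simp: indicator_def)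
  then have "(\<Sum>i\<in>{- int m..int n}. measure M (B \<inter> iterz M T i ` C))
      = (\<integral>\<omega>. (\<Sum>i\<in>{- int m..int n}. indicator B \<omega> * indicator C (iterz M T (- i) \<omega>)) \<partial>M)"
    unfolding measure_eq by (intro Bochner_Integration.integral_sum[symmetric])
  then have "(\<Sum>i\<in>{- int m..int n}. measure M (B \<inter> iterz M T i ` C)) / real (m + n + 1)
      = (\<integral>\<omega>. (\<Sum>i\<in>{- int m..int n}. indicator B \<omega> * indicator C (iterz M T (- i) \<omega>))
          / real (m + n + 1) \<partial>M)"
    by simp
  also have "\<dots> = (\<integral>\<omega>. indicator B \<omega> * two_sided_average (indicator C) n m \<omega> \<partial>M)"
  proof (rule Bochner_Integration.integral_cong[OF refl])
    fix \<omega>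
    show "(\<Sum>i\<in>{- int m..int n}. indicator B \<omega> * indicator C (iterz M T (- i) \<omega>)) / real (m + n + 1)
        = indicator B \<omega> * two_sided_average (indicator C) n m \<omega>"
      unfolding two_sided_average_def sum_distrib_left[symmetric]
        sum_int_interval_reflect[of "\<lambda>j. indicator C (iterz M T j \<omega>)" m n]
      by (simp only: add.commute[of m n] times_divide_eq_right)
  qed
  finally show ?thesis .
qed

end

section \<open>The Cesaro limit Q\<close>

locale cesaro_system = invertible_system +
  assumes convergent_cesaro_avg: "A \<in> sets M \<Longrightarrow> convergent (cesaro_avg M T A)"
begin

lemma finite_measure_distr_funpow: "finite_measure (distr M M (T_inv ^^ i))"
  by (intro finite_measure_distr measurable_funpow measurable_T_inv)

lemma cesaro_avg_tendsto: "A \<in> sets M \<Longrightarrow> cesaro_avg M T A \<longlonglongrightarrow> lim (cesaro_avg M T A)"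
  using convergent_cesaro_avg convergent_LIMSEQ_iff by blast

lemma cesaro_avg_space: "0 < n \<Longrightarrow> cesaro_avg M T (space M) n = 1"
  using cesaro_avg_invariant[of "space M" n] T_space by (auto simp: prob_space)

sublocale cesaro: setwise_limit "space M" "sets M" "\<lambda>n A. cesaro_avg M T A n"
  "\<lambda>A. lim (cesaro_avg M T A)" 1
proof
  fix n
  show "0 \<le> cesaro_avg M T A n" for A
    by (simp add: cesaro_avg_def sum_nonneg divide_nonneg_nonneg)
  show "additive (sets M) (\<lambda>A. cesaro_avg M T A n)"
    unfolding additive_def
    by (simp add: cesaro_avg_eq_distr sum.distrib add_divide_distrib
        finite_measure.finite_measure_Union[OF finite_measure_distr_funpow])
  show "cesaro_avg M T (space M) n \<le> 1"
    using cesaro_avg_space[of n] by (cases "n = 0") (auto simp: cesaro_avg_def)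
  show "(\<lambda>k. cesaro_avg M T (A k) n) \<longlonglongrightarrow> 0"
    if A: "range A \<subseteq> sets M" "decseq A" "(\<Inter>i. A i) = {}" for A
  proof -
    have "(\<lambda>k. measure (distr M M (T_inv ^^ i)) (A k)) \<longlonglongrightarrow> 0" for i
      using finite_measure.finite_Lim_measure_decseq[OF finite_measure_distr_funpow _ A(2), of i] A
      by simp
    then have "(\<lambda>k. (\<Sum>i<n. measure (distr M M (T_inv ^^ i)) (A k)) / real n) \<longlonglongrightarrow> 0"
      by (intro tendsto_divide_zero tendsto_null_sum)
    then show ?thesis using A(1) by (simp add: cesaro_avg_eq_distr range_subsetD)
  qed
qed (rule cesaro_avg_tendsto)

definition Q :: "'a measure" where
  "Q = measure_of (space M) (sets M) (\<lambda>A. ennreal (lim (cesaro_avg M T A)))"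

lemma sets_Q [simp]: "sets Q = sets M"
  unfolding Q_def by (rule sets.sets_measure_of_eq)

lemma space_Q [simp]: "space Q = space M"
  unfolding Q_def by (rule sets.space_measure_of_eq)

lemma emeasure_Q: "A \<in> sets M \<Longrightarrow> emeasure Q A = ennreal (lim (cesaro_avg M T A))"
  unfolding Q_def using cesaro.limit_countably_additive
  by (intro emeasure_measure_of_sigma sets.sigma_algebra_axioms)
    (auto simp: positive_def cesaro.limit_empty)

lemma measure_Q: "A \<in> sets M \<Longrightarrow> measure Q A = lim (cesaro_avg M T A)"
  by (simp add: measure_def emeasure_Q cesaro.limit_nonneg)

lemma measure_Q_invariant:
  assumes "A \<in> sets M" "T -` A \<inter> space M = A"
  shows "measure Q A = measure M A"
proof -
  have "eventually (\<lambda>n. cesaro_avg M T A n = measure M A) sequentially"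
    using cesaro_avg_invariant[OF assms(2)] by (intro eventually_sequentiallyI[of 1]) auto
  then have "cesaro_avg M T A \<longlonglongrightarrow> measure M A" by (rule tendsto_eventually)
  then show ?thesis using measure_Q[OF assms(1)] limI by simp
qed

lemma prob_space_Q: "prob_space Q"
proof
  have "T -` space M \<inter> space M = space M" using T_space by auto
  then show "emeasure Q (space Q) = 1"
    using measure_Q_invariant[of "space M"] by (simp add: emeasure_Q measure_Q prob_space)
qed

lemma measure_Q_vimage_T:
  assumes A: "A \<in> sets M"
  shows "measure Q (T -` A \<inter> space M) = measure Q A"
proof -
  define A' where "A' = T -` A \<inter> space M"
  have A': "A' \<in> sets M" unfolding A'_def using measurable_sets[OF measurable_T A] .
  have "(\<lambda>n. 1 / real (Suc n)) \<longlonglongrightarrow> 0"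
    using LIMSEQ_Suc[OF lim_const_over_n[of 1]] by simp
  then have "(\<lambda>n. measure M A' * (1 / real (Suc n)) + real n / real (Suc n) * cesaro_avg M T A n)
      \<longlonglongrightarrow> measure M A' * 0 + 1 * lim (cesaro_avg M T A)"
    by (intro tendsto_intros LIMSEQ_n_over_Suc_n cesaro_avg_tendsto A)
  moreover have "cesaro_avg M T A' (Suc n)
      = measure M A' * (1 / real (Suc n)) + real n / real (Suc n) * cesaro_avg M T A n" for n
    unfolding A'_def cesaro_avg_vimage_T_Suc[OF A] by simp
  ultimately have "(\<lambda>n. cesaro_avg M T A' (Suc n)) \<longlonglongrightarrow> lim (cesaro_avg M T A)"
    by simp
  moreover have "(\<lambda>n. cesaro_avg M T A' (Suc n)) \<longlonglongrightarrow> lim (cesaro_avg M T A')"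
    using LIMSEQ_Suc[OF cesaro_avg_tendsto[OF A']] .
  ultimately have "lim (cesaro_avg M T A') = lim (cesaro_avg M T A)"
    using LIMSEQ_unique by blast
  then show ?thesis using measure_Q[OF A] measure_Q[OF A'] by (simp add: A'_def)
qed

lemma measurable_T_Q [measurable]: "T \<in> Q \<rightarrow>\<^sub>M Q"
  unfolding measurable_cong_sets[OF sets_Q sets_Q] by (rule measurable_T)

lemma measurable_T_inv_Q [measurable]: "T_inv \<in> Q \<rightarrow>\<^sub>M Q"
  unfolding measurable_cong_sets[OF sets_Q sets_Q] by (rule measurable_T_inv)

lemma distr_Q_T: "distr Q Q T = Q"
proof (rule measure_eqI)
  interpret Q: prob_space Q by (rule prob_space_Q)
  fix A assume "A \<in> sets (distr Q Q T)"
  then have A: "A \<in> sets M" by simp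
  then show "emeasure (distr Q Q T) A = emeasure Q A"
    using measure_Q_vimage_T[OF A] measurable_sets[OF measurable_T A]
    by (simp add: emeasure_distr Q.emeasure_eq_measure)
qed simp

lemma measure_preserving_T: "measure_preserving Q T"
  by (intro measure_preserving.intro measure_preserving_axioms.intro prob_space_Q measurable_T_Q
      distr_Q_T)

lemma distr_Q_T_inv: "distr Q Q T_inv = Q"
proof -
  have "distr Q Q T_inv = distr (distr Q Q T) Q T_inv" by (simp only: distr_Q_T)
  also have "\<dots> = distr Q Q (T_inv \<circ> T)" by (simp add: distr_distr)
  also have "\<dots> = distr Q Q (\<lambda>x. x)" by (rule distr_cong) (auto simp: T_inv_T)
  finally show ?thesis by simp
qed

lemma measure_preserving_T_inv: "measure_preserving Q T_inv"
  by (intro measure_preserving.intro measure_preserving_axioms.intro prob_space_Q measurable_T_inv_Q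
      distr_Q_T_inv)

lemma distr_Q_iterz: "distr Q Q (iterz M T i) = Q"
  using measure_preserving.distr_funpow[OF measure_preserving_T]
    measure_preserving.distr_funpow[OF measure_preserving_T_inv]
  by (cases i rule: iterz_cases) simp_all

text \<open>The saturation of a Q-null set under all powers of T is invariant and Q-null, and Q agrees
  with P on invariant sets.\<close>

lemma absolutely_continuous_Q: "absolutely_continuous Q M"
  unfolding absolutely_continuous_def
proof
  fix N assume "N \<in> null_sets Q"
  then have N: "N \<in> sets M" "emeasure Q N = 0" by auto
  define G where "G = (\<Union>k. iterz M T k -` N \<inter> space M)"
  have G: "G \<in> sets M" unfolding G_def using N(1) by measurable
  have "iterz M T k -` N \<inter> space M \<in> null_sets Q" for k
    using emeasure_distr[of "iterz M T k" Q Q N] N measurable_sets[OF measurable_iterz N(1), of k]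
    unfolding distr_Q_iterz by (simp add: measurable_cong_sets[OF sets_Q sets_Q] null_sets_def)
  then have "G \<in> null_sets Q" unfolding G_def by (intro null_sets_UN') auto
  then have "measure Q G = 0" by (simp add: measure_def null_sets_def)
  moreover have "T -` G \<inter> space M = G"
  proof -
    have "T x \<in> G \<longleftrightarrow> x \<in> G" if x: "x \<in> space M" for x
    proof -
      have "T x \<in> G \<longleftrightarrow> (\<exists>k. iterz M T (k + 1) x \<in> N)"
        unfolding G_def using T_space[OF x] iterz_T[OF x] by auto
      also have "\<dots> \<longleftrightarrow> (\<exists>k. iterz M T k x \<in> N)"
      proof
        assume "\<exists>k. iterz M T k x \<in> N"
        then obtain k where "iterz M T k x \<in> N" by blast
        then show "\<exists>k. iterz M T (k + 1) x \<in> N" by (intro exI[of _ "k - 1"]) simp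
      qed blast
      finally show ?thesis unfolding G_def using x by auto
    qed
    then show ?thesis using sets.sets_into_space[OF G] by auto
  qed
  ultimately have "G \<in> null_sets M"
    using measure_Q_invariant[OF G] G by (simp add: null_sets_def emeasure_eq_measure)
  moreover have "N \<subseteq> G"
    using sets.sets_into_space[OF N(1)] by (auto simp: G_def intro!: exI[of _ 0])
  ultimately show "N \<in> null_sets M"
    using N(1) emeasure_mono[of N G M] G by (auto simp: null_sets_def)
qed

section \<open>Ergodicity, two-sided averages and mixing\<close>

lemma ergodic_for_Q_T_inv: "ergodic_for M T Q \<Longrightarrow> ergodic_for Q T_inv Q"
  using invariant_if_T_inv_invariant by (simp add: ergodic_for_def)

theorem two_sided_ergodic_theorem:
  assumes erg: "ergodic_for M T Q" and f: "integrable Q f"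
  shows "AE \<omega> in M. ((\<lambda>(m, n). two_sided_average f m n \<omega>) \<longlongrightarrow> integral\<^sup>L Q f) sum_to_infty"
proof -
  interpret fwd: measure_preserving Q T by (rule measure_preserving_T)
  interpret bwd: measure_preserving Q T_inv by (rule measure_preserving_T_inv)
  have "AE \<omega> in Q. (\<lambda>n. fwd.birkhoff_sum f n \<omega> / real n) \<longlonglongrightarrow> integral\<^sup>L Q f
      \<and> (\<lambda>n. bwd.birkhoff_sum f n \<omega> / real n) \<longlonglongrightarrow> integral\<^sup>L Q f"
    using fwd.birkhoff_ergodic_theorem[OF _ f] bwd.birkhoff_ergodic_theorem[OF _ f]
      erg ergodic_for_Q_T_inv by (auto simp: ergodic_for_def intro: AE_conjI)
  then have "AE \<omega> in M. (\<lambda>n. fwd.birkhoff_sum f n \<omega> / real n) \<longlonglongrightarrow> integral\<^sup>L Q f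
      \<and> (\<lambda>n. bwd.birkhoff_sum f n \<omega> / real n) \<longlonglongrightarrow> integral\<^sup>L Q f"
    by (rule absolutely_continuous_AE[OF sets_Q[symmetric] absolutely_continuous_Q])
  then show ?thesis
  proof eventually_elim
    case (elim \<omega>)
    have "two_sided_average f m n \<omega>
        = (fwd.birkhoff_sum f (Suc n) \<omega> + bwd.birkhoff_sum f (Suc m) \<omega> + - f \<omega>) / real (m + n + 1)"
      for m n
      unfolding two_sided_average_def sum_int_interval_split[of "\<lambda>i. f (iterz M T i \<omega>)"]
      by (simp add: fwd.birkhoff_sum_def bwd.birkhoff_sum_def iterz_of_nat iterz_minus_of_nat
          del: of_nat_Suc)
    then show ?case
      using elim tendsto_two_sided_average[of "\<lambda>n. fwd.birkhoff_sum f n \<omega>" "integral\<^sup>L Q f"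
          "\<lambda>n. bwd.birkhoff_sum f n \<omega>" "- f \<omega>"]
      by simp
  qed
qed

lemma integrable_indicator_Q: "C \<in> sets M \<Longrightarrow> integrable Q (indicator C :: 'a \<Rightarrow> real)"
  by (rule integrable_real_indicator) (auto simp: emeasure_Q)

lemma integral_indicator_Q: "C \<in> sets M \<Longrightarrow> integral\<^sup>L Q (indicator C :: 'a \<Rightarrow> real) = measure Q C"
  using sets.sets_into_space by (simp add: Int_absorb2)

theorem mixing_if_ergodic:
  assumes erg: "ergodic_for M T Q" and B [measurable]: "B \<in> sets M" and C [measurable]: "C \<in> sets M"
  shows "((\<lambda>(m, n). (\<Sum>i\<in>{- int m..int n}. measure M (B \<inter> iterz M T i ` C)) / real (m + n + 1))
           \<longlongrightarrow> measure M B * measure Q C) sum_to_infty"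
proof -
  have "AE \<omega> in M. ((\<lambda>(m, n). two_sided_average (indicator C) m n \<omega>) \<longlongrightarrow> measure Q C) sum_to_infty"
    using two_sided_ergodic_theorem[OF erg integrable_indicator_Q[OF C]]
    unfolding integral_indicator_Q[OF C] .
  then have "AE \<omega> in M. ((\<lambda>p. indicator B \<omega> * two_sided_average (indicator C) (snd p) (fst p) \<omega>)
      \<longlongrightarrow> indicator B \<omega> * measure Q C) sum_to_infty"
  proof eventually_elim
    case (elim \<omega>)
    from filterlim_compose[OF elim filterlim_swap_sum_to_infty]
    show ?case by (intro tendsto_mult_left) (simp add: case_prod_beta)
  qed
  then have "((\<lambda>p. \<integral>\<omega>. indicator B \<omega> * two_sided_average (indicator C) (snd p) (fst p) \<omega> \<partial>M)
      \<longlongrightarrow> \<integral>\<omega>. indicator B \<omega> * measure Q C \<partial>M) sum_to_infty"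
    by (intro integral_dominated_convergence_sum_to_infty[where w="\<lambda>_. 1"])
      (use two_sided_average_indicator_bounds in \<open>auto simp: indicator_def\<close>)
  then show ?thesis unfolding case_prod_beta' mixing_average_eq_integral[OF B C] by simp
qed

lemma ergodic_if_mixing:
  assumes mixing: "\<forall>B\<in>sets M. \<forall>C\<in>sets M.
      ((\<lambda>(m, n). (\<Sum>i\<in>{- int m..int n}. measure M (B \<inter> iterz M T i ` C)) / real (m + n + 1))
        \<longlongrightarrow> measure M B * measure Q C) sum_to_infty"
  shows "ergodic_for M T Q"
  unfolding ergodic_for_def
proof (intro ballI impI)
  fix A assume A: "A \<in> sets M" and inv: "T -` A \<inter> space M = A"
  have "A \<subseteq> space M" using sets.sets_into_space[OF A] .
  then have img: "A \<inter> iterz M T i ` A = A" for i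
    using image_iterz[of A i] iterz_invariant[OF inv] by auto
  have "((\<lambda>(m, n). (\<Sum>i\<in>{- int m..int n}. measure M (A \<inter> iterz M T i ` A)) / real (m + n + 1))
      \<longlongrightarrow> measure M A * measure Q A) sum_to_infty"
    using mixing A by blast
  then have "((\<lambda>_. measure M A) \<longlongrightarrow> measure M A * measure Q A) sum_to_infty"
    by (simp only: img average_const_int_interval case_prod_beta')
  then have "measure M A = measure M A * measure Q A"
    using tendsto_const_iff[OF sum_to_infty_neq_bot] by blast
  moreover have "measure Q A = measure M A" using measure_Q_invariant[OF A inv] .
  ultimately have "measure Q A * (measure Q A - 1) = 0" by (simp add: algebra_simps)
  then show "measure Q A = 0 \<or> measure Q A = 1" by simp
qed

lemma ergodic_if_two_sided_averages:
  assumes averages: "\<And>f. integrable Q f \<Longrightarrow>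
      AE \<omega> in M. ((\<lambda>(m, n). two_sided_average f m n \<omega>) \<longlongrightarrow> integral\<^sup>L Q f) sum_to_infty"
  shows "ergodic_for M T Q"
  unfolding ergodic_for_def
proof (intro ballI impI)
  fix A assume A: "A \<in> sets M" and inv: "T -` A \<inter> space M = A"
  have "AE \<omega> in M. ((\<lambda>(m, n). two_sided_average (indicator A) m n \<omega>) \<longlongrightarrow> measure Q A) sum_to_infty"
    using averages[OF integrable_indicator_Q[OF A]] unfolding integral_indicator_Q[OF A] .
  with AE_space have ae: "AE \<omega> in M. indicator A \<omega> = measure Q A"
  proof eventually_elim
    case (elim \<omega>)
    have "indicator A (iterz M T i \<omega>) = (indicator A \<omega> :: real)" for i
      using iterz_invariant[OF inv elim(1)] by (simp add: indicator_def)
    with elim(2) have "((\<lambda>_. indicator A \<omega> :: real) \<longlongrightarrow> measure Q A) sum_to_infty"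
      by (simp only: two_sided_average_const case_prod_beta')
    then show ?case
      using tendsto_const_iff[OF sum_to_infty_neq_bot] by blast
  qed
  have "\<exists>\<omega>. indicator A \<omega> = measure Q A"
  proof (rule ccontr)
    assume "\<nexists>\<omega>. indicator A \<omega> = measure Q A"
    with ae have "AE \<omega> in M. False" by (simp add: eventually_mono)
    then show False by simp
  qed
  then obtain \<omega> where "indicator A \<omega> = measure Q A" ..
  then show "measure Q A = 0 \<or> measure Q A = 1" by (cases "\<omega> \<in> A") auto
qed

lemma ergodic_iff_mixing:
  "ergodic_for M T Q \<longleftrightarrow>
    (\<forall>B\<in>sets M. \<forall>C\<in>sets M.
      ((\<lambda>(m, n). (\<Sum>i\<in>{- int m..int n}. measure M (B \<inter> iterz M T i ` C)) / real (m + n + 1))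
        \<longlongrightarrow> measure M B * measure Q C) sum_to_infty)"
  using mixing_if_ergodic ergodic_if_mixing by blast

lemma ergodic_iff_two_sided_averages:
  "ergodic_for M T Q \<longleftrightarrow>
    (\<forall>f :: 'a \<Rightarrow> real. integrable Q f \<longrightarrow>
      (AE \<omega> in M. ((\<lambda>(m, n). (\<Sum>i\<in>{- int m..int n}. f (iterz M T i \<omega>)) / real (m + n + 1))
        \<longlongrightarrow> integral\<^sup>L Q f) sum_to_infty))"
  (is "_ \<longleftrightarrow> ?averages")
proof
  assume "ergodic_for M T Q"
  from two_sided_ergodic_theorem[OF this] show ?averages
    unfolding two_sided_average_def by blast
next
  assume ?averages
  then show "ergodic_for M T Q"
    by (intro ergodic_if_two_sided_averages) (unfold two_sided_average_def, blast)
qed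

end

theorem theorem4p7:
  fixes M :: "'a measure" and T :: "'a \<Rightarrow> 'a"
  assumes P: "prob_space M"
    and T_bij: "bij_betw T (space M) (space M)"
    and T_meas: "T \<in> measurable M M"
    and Tinv_meas: "the_inv_into (space M) T \<in> measurable M M"
    and lim_ex: "\<forall>A\<in>sets M. convergent (cesaro_avg M T A)"
  shows "\<exists>Q. sets Q = sets M \<and> prob_space Q
            \<and> (\<forall>A\<in>sets M. measure Q A = lim (cesaro_avg M T A))
            \<and> (\<forall>A\<in>sets M. measure Q (T -` A \<inter> space M) = measure Q A)
            \<and> (ergodic_for M T Q \<longleftrightarrow>
                 (\<forall>B\<in>sets M. \<forall>C\<in>sets M.
                    ((\<lambda>(m, n). (\<Sum>i\<in>{- int m..int n}. measure M (B \<inter> iterz M T i ` C))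
                                 / real (m + n + 1))
                      \<longlongrightarrow> measure M B * measure Q C) sum_to_infty))
            \<and> (ergodic_for M T Q \<longleftrightarrow>
                 (\<forall>f :: 'a \<Rightarrow> real. integrable Q f \<longrightarrow>
                    (AE \<omega> in M.
                      ((\<lambda>(m, n). (\<Sum>i\<in>{- int m..int n}. f (iterz M T i \<omega>))
                                   / real (m + n + 1))
                        \<longlongrightarrow> integral\<^sup>L Q f) sum_to_infty)))"
proof -
  interpret cesaro_system M T
    using P T_bij T_meas Tinv_meas lim_ex
    by (simp add: cesaro_system_def cesaro_system_axioms_def invertible_system_def
        invertible_system_axioms_def)
  show ?thesis
  proof (intro exI[of _ Q] conjI)
    show "sets Q = sets M" by simp
    show "prob_space Q" by (rule prob_space_Q)
    show "\<forall>A\<in>sets M. measure Q A = lim (cesaro_avg M T A)" by (simp add: measure_Q)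
    show "\<forall>A\<in>sets M. measure Q (T -` A \<inter> space M) = measure Q A" by (simp add: measure_Q_vimage_T)
  qed (fact ergodic_iff_mixing ergodic_iff_two_sided_averages)+
qed

end
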